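(* Let $(A=\bigoplus_{k\ge1}A_k,\bullet_i,\Delta)$ be a preshuffle bialgebra, let $q\ge0$, and let $x_1,\dots,x_q,y,z\in A$ be homogeneous primitive elements ($\Delta$ vanishes on each). Then $L^p_q(x_1,\dots,x_q;y;z)$ is primitive for every $1\le p\le|y|$.
   Context: A preshuffle algebra is a graded vector space $A=\bigoplus_{n\ge0}A_n$ with linear maps $\bullet_i:A_n\otimes A_m\to A_{n+m}$ ($0\le i\le m$) such that $(x\bullet_iy)\bullet_jz=x\bullet_{i+j}(y\bullet_jz)$ for $0\le i\le|y|$, $0\le j\le|z|$ ($|\cdot|$ denotes degree). A preshuffle bialgebra is a preshuffle algebra with $A_0=0$ and a coassociative coproduct $\Delta$ with $\Delta(A_n)\subseteq\bigoplus_{i=1}^{n-1}A_i\otimes A_{n-i}$ (Sweedler notation $\Delta(z)=\sum z_{(1)}\otimes z_{(2)}$) such that for homogeneous $x,y$: (1) $\Delta(x\bullet_0y)=\sum x_{(1)}\otimes(x_{(2)}\bullet_0y)+x\otimes y+\sum(x\bullet_0y_{(1)})\otimes y_{(2)}$; (2) for $1\le i\le|y|-1$: $\Delta(x\bullet_iy)=\sum_{|y_{(1)}|\le i}y_{(1)}\otimes(x\bullet_{i-|y_{(1)}|}y_{(2)})+\sum_{|y_{(1)}|=i}(x_{(1)}\bullet_iy_{(1)})\otimes(x_{(2)}\bullet_0y_{(2)})+\sum_{|y_{(1)}|\ge i}(x\bullet_iy_{(1)})\otimes y_{(2)}$; (3) $\Delta(x\bullet_{|y|}y)=\sum y_{(1)}\otimes(x\bullet_{|y_{(2)}|}y_{(2)})+y\otimes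 x+\sum(x_{(1)}\bullet_{|y|}y)\otimes x_{(2)}$. The operations $L^p_q$: for $q=0$, $L^p_0(y;z)=z\bullet_py$ if $0<p<|y|$, and $L^{|y|}_0(y;z)=z\bullet_{|y|}y-y\bullet_0z$. For $q\ge1$, with $N=\sum_{k=1}^q|x_k|$ and $N'=\sum_{k=2}^q|x_k|$: $L^p_q(x_1,\dots,x_q;y;z)=z\bullet_{p+N}(x_1\bullet_0\cdots\bullet_0x_q\bullet_0y)-x_1\bullet_0\big(z\bullet_{p+N'}(x_2\bullet_0\cdots\bullet_0x_q\bullet_0y)\big)$ (the product $\bullet_0$ is associative). *)

theory Defs
  imports "HOL-Library.Poly_Mapping"
begin

text \<open>A graded vector space over a field 'k is modelled as the free vector space
  of finitely supported functions on a homogeneous basis 'b, with degree function deg on basis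
  elements. Tensor products are free vector spaces on pairs of basis elements.\<close>

definition smul :: "'k::field \<Rightarrow> ('b \<Rightarrow>\<^sub>0 'k) \<Rightarrow> ('b \<Rightarrow>\<^sub>0 'k)" where
  "smul c v = Poly_Mapping.map (\<lambda>a. c * a) v"

definition lin_ext :: "('b \<Rightarrow> ('c \<Rightarrow>\<^sub>0 'k::field)) \<Rightarrow> ('b \<Rightarrow>\<^sub>0 'k) \<Rightarrow> ('c \<Rightarrow>\<^sub>0 'k)" where
  "lin_ext f v = (\<Sum>b\<in>Poly_Mapping.keys v. smul (Poly_Mapping.lookup v b) (f b))"

abbreviation bas :: "'b \<Rightarrow> ('b \<Rightarrow>\<^sub>0 'k::field)" where
  "bas b \<equiv> Poly_Mapping.single b 1"

definition tens :: "('b \<Rightarrow>\<^sub>0 'k::field) \<Rightarrow> ('c \<Rightarrow>\<^sub>0 'k) \<Rightarrow> ('b \<times> 'c \<Rightarrow>\<^sub>0 'k)" where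
  "tens u v = lin_ext (\<lambda>a. lin_ext (\<lambda>b. Poly_Mapping.single (a, b) 1) v) u"

definition hom :: "('b \<Rightarrow> nat) \<Rightarrow> nat \<Rightarrow> ('b \<Rightarrow>\<^sub>0 'k::field) \<Rightarrow> bool" where
  "hom deg n v \<longleftrightarrow> (\<forall>b\<in>Poly_Mapping.keys v. deg b = n)"

text \<open>Degree |v| of a homogeneous element (0 for the zero vector; irrelevant there).\<close>
definition hdeg :: "('b \<Rightarrow> nat) \<Rightarrow> ('b \<Rightarrow>\<^sub>0 'k::field) \<Rightarrow> nat" where
  "hdeg deg v = (if v = 0 then 0 else deg (SOME b. b \<in> Poly_Mapping.keys v))"

definition bul :: "(nat \<Rightarrow> 'b \<Rightarrow> 'b \<Rightarrow> ('b \<Rightarrow>\<^sub>0 'k::field)) \<Rightarrow> nat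
    \<Rightarrow> ('b \<Rightarrow>\<^sub>0 'k) \<Rightarrow> ('b \<Rightarrow>\<^sub>0 'k) \<Rightarrow> ('b \<Rightarrow>\<^sub>0 'k)" where
  "bul bb i x y = lin_ext (\<lambda>a. lin_ext (\<lambda>b. bb i a b) y) x"

definition Delta :: "('b \<Rightarrow> ('b \<times> 'b \<Rightarrow>\<^sub>0 'k::field)) \<Rightarrow> ('b \<Rightarrow>\<^sub>0 'k) \<Rightarrow> ('b \<times> 'b \<Rightarrow>\<^sub>0 'k)" where
  "Delta cop v = lin_ext cop v"

definition preshuffle_bialgebra ::
  "('b \<Rightarrow> nat) \<Rightarrow> (nat \<Rightarrow> 'b \<Rightarrow> 'b \<Rightarrow> ('b \<Rightarrow>\<^sub>0 'k::field)) \<Rightarrow> ('b \<Rightarrow> ('b \<times> 'b \<Rightarrow>\<^sub>0 'k)) \<Rightarrow> bool"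
where
  "preshuffle_bialgebra deg bb cop \<longleftrightarrow>
     \<comment> \<open>A_0 = 0\<close>
     (\<forall>b. 0 < deg b) \<and>
     \<comment> \<open>\<bullet>_i maps A_n \<otimes> A_m to A_(n+m) for 0 \<le> i \<le> m\<close>
     (\<forall>i a b. i \<le> deg b \<longrightarrow> hom deg (deg a + deg b) (bb i a b)) \<and>
     \<comment> \<open>preshuffle associativity\<close>
     (\<forall>x y z n m l i j. hom deg n x \<and> hom deg m y \<and> hom deg l z \<and> i \<le> m \<and> j \<le> l \<longrightarrow>
        bul bb j (bul bb i x y) z = bul bb (i + j) x (bul bb j y z)) \<and>
     \<comment> \<open>\<Delta>(A_n) \<subseteq> \<Oplus>_{i=1}^{n-1} A_i \<otimes> A_(n-i) (with A_0 = 0)\<close>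
     (\<forall>b c d. (c, d) \<in> Poly_Mapping.keys (cop b) \<longrightarrow> deg c + deg d = deg b) \<and>
     \<comment> \<open>coassociativity (\<Delta> \<otimes> id)\<Delta> = (id \<otimes> \<Delta>)\<Delta>\<close>
     (\<forall>b. lin_ext (\<lambda>(c, d). lin_ext (\<lambda>(u, v). Poly_Mapping.single (u, v, d) 1) (cop c)) (cop b)
        = lin_ext (\<lambda>(c, d). lin_ext (\<lambda>(v, w). Poly_Mapping.single (c, v, w) 1) (cop d)) (cop b)) \<and>
     \<comment> \<open>compatibility (1)\<close>
     (\<forall>x y n m. hom deg n x \<and> hom deg m y \<longrightarrow>
        Delta cop (bul bb 0 x y) =
          lin_ext (\<lambda>(a, b). tens (bas a) (bul bb 0 (bas b) y)) (Delta cop x)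
          + tens x y
          + lin_ext (\<lambda>(c, d). tens (bul bb 0 x (bas c)) (bas d)) (Delta cop y)) \<and>
     \<comment> \<open>compatibility (2)\<close>
     (\<forall>x y n m i. hom deg n x \<and> hom deg m y \<and> 1 \<le> i \<and> i \<le> m - 1 \<longrightarrow>
        Delta cop (bul bb i x y) =
          lin_ext (\<lambda>(c, d). if deg c \<le> i then tens (bas c) (bul bb (i - deg c) x (bas d)) else 0)
            (Delta cop y)
          + lin_ext (\<lambda>(a, b). lin_ext (\<lambda>(c, d).
                if deg c = i then tens (bul bb i (bas a) (bas c)) (bul bb 0 (bas b) (bas d)) else 0)
              (Delta cop y)) (Delta cop x)
          + lin_ext (\<lambda>(c, d). if i \<le> deg c then tens (bul bb i x (bas c)) (bas d) else 0)
            (Delta cop y)) \<and>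
     \<comment> \<open>compatibility (3)\<close>
     (\<forall>x y n m. hom deg n x \<and> hom deg m y \<longrightarrow>
        Delta cop (bul bb m x y) =
          lin_ext (\<lambda>(c, d). tens (bas c) (bul bb (deg d) x (bas d))) (Delta cop y)
          + tens y x
          + lin_ext (\<lambda>(a, b). tens (bul bb m (bas a) y) (bas b)) (Delta cop x))"

definition chain0 :: "(nat \<Rightarrow> 'b \<Rightarrow> 'b \<Rightarrow> ('b \<Rightarrow>\<^sub>0 'k::field)) \<Rightarrow> ('b \<Rightarrow>\<^sub>0 'k) list
    \<Rightarrow> ('b \<Rightarrow>\<^sub>0 'k) \<Rightarrow> ('b \<Rightarrow>\<^sub>0 'k)" where
  "chain0 bb xs y = foldr (\<lambda>x acc. bul bb 0 x acc) xs y"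

definition Lop :: "('b \<Rightarrow> nat) \<Rightarrow> (nat \<Rightarrow> 'b \<Rightarrow> 'b \<Rightarrow> ('b \<Rightarrow>\<^sub>0 'k::field)) \<Rightarrow> nat
    \<Rightarrow> ('b \<Rightarrow>\<^sub>0 'k) list \<Rightarrow> ('b \<Rightarrow>\<^sub>0 'k) \<Rightarrow> ('b \<Rightarrow>\<^sub>0 'k) \<Rightarrow> ('b \<Rightarrow>\<^sub>0 'k)" where
  "Lop deg bb p xs y z =
     (case xs of
        [] \<Rightarrow> (if p = hdeg deg y then bul bb (hdeg deg y) z y - bul bb 0 y z
              else bul bb p z y)
      | x1 # xs' \<Rightarrow>
          bul bb (p + sum_list (map (hdeg deg) xs)) z (chain0 bb xs y)
          - bul bb 0 x1 (bul bb (p + sum_list (map (hdeg deg) xs')) z (chain0 bb xs' y)))"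

end

theory Submission
  imports Defs
begin

text \<open>Write \<open>W = x\<^sub>1 \<bullet>\<^sub>0 \<dots> \<bullet>\<^sub>0 x\<^sub>q \<bullet>\<^sub>0 y\<close> and \<open>N = |x\<^sub>1| + \<dots> + |x\<^sub>q|\<close>.
  Since the \<open>x\<^sub>k\<close> and \<open>y\<close> are primitive, rule (1) shows inductively that every left tensor
  factor of \<open>\<Delta> W\<close> has degree at most \<open>N < p + N\<close>. With \<open>z\<close> primitive, rules (2) and (3) then
  collapse \<open>\<Delta> (z \<bullet>\<^bsub>p+N\<^esub> W)\<close> to \<open>\<Sum> W\<^sub>1 \<otimes> (z \<bullet>\<^bsub>p+N-|W\<^sub>1|\<^esub> W\<^sub>2)\<close>, plus \<open>W \<otimes> z\<close> when \<open>p = |y|\<close>.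
  Peeling off \<open>x\<^sub>1\<close> from \<open>W\<close> in this sum produces exactly \<open>\<Delta> (x\<^sub>1 \<bullet>\<^sub>0 (z \<bullet>\<^bsub>p+N'\<^esub> \<dots>))\<close>,
  again by rule (1), so the two terms of \<open>L\<^sup>p\<^sub>q\<close> have the same coproduct. For \<open>q = 0\<close> both
  \<open>z \<bullet>\<^bsub>|y|\<^esub> y\<close> and \<open>y \<bullet>\<^sub>0 z\<close> have coproduct \<open>y \<otimes> z\<close>, and \<open>z \<bullet>\<^sub>p y\<close> is primitive for \<open>p < |y|\<close>.\<close>

lemma lookup_smul [simp]: "Poly_Mapping.lookup (smul c v) b = c * Poly_Mapping.lookup v b"
  unfolding smul_def by (simp add: Poly_Mapping.map.rep_eq when_def)

lemma lookup_lin_ext_superset: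
  assumes "finite S" "Poly_Mapping.keys v \<subseteq> S"
  shows "Poly_Mapping.lookup (lin_ext f v) x
    = (\<Sum>b\<in>S. Poly_Mapping.lookup v b * Poly_Mapping.lookup (f b) x)"
proof -
  have "Poly_Mapping.lookup (lin_ext f v) x
      = (\<Sum>b\<in>Poly_Mapping.keys v. Poly_Mapping.lookup v b * Poly_Mapping.lookup (f b) x)"
    unfolding lin_ext_def by (simp add: lookup_sum)
  also have "\<dots> = (\<Sum>b\<in>S. Poly_Mapping.lookup v b * Poly_Mapping.lookup (f b) x)"
    using assms by (intro sum.mono_neutral_left) (auto simp: in_keys_iff)
  finally show ?thesis .
qed

lemma lookup_lin_ext:
  "Poly_Mapping.lookup (lin_ext f v) x
    = (\<Sum>b\<in>Poly_Mapping.keys v. Poly_Mapping.lookup v b * Poly_Mapping.lookup (f b) x)"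
  by (rule lookup_lin_ext_superset) auto

lemma lin_ext_add: "lin_ext f (u + v) = lin_ext f u + lin_ext f v"
proof (rule poly_mapping_eqI)
  fix x
  let ?S = "Poly_Mapping.keys u \<union> Poly_Mapping.keys v"
  have "Poly_Mapping.keys (u + v) \<subseteq> ?S" by (rule keys_add)
  then show "Poly_Mapping.lookup (lin_ext f (u + v)) x = Poly_Mapping.lookup (lin_ext f u + lin_ext f v) x"
    by (simp add: lookup_add lookup_lin_ext_superset[of ?S] distrib_right sum.distrib)
qed

lemma lin_ext_diff: "lin_ext f (u - v) = lin_ext f u - lin_ext f v"
proof (rule poly_mapping_eqI)
  fix x
  let ?S = "Poly_Mapping.keys u \<union> Poly_Mapping.keys v"
  have "Poly_Mapping.keys (u - v) \<subseteq> ?S" by (auto simp: in_keys_iff lookup_minus)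
  then show "Poly_Mapping.lookup (lin_ext f (u - v)) x = Poly_Mapping.lookup (lin_ext f u - lin_ext f v) x"
    by (simp add: lookup_minus lookup_lin_ext_superset[of ?S] left_diff_distrib sum_subtractf)
qed

lemma lin_ext_zero [simp]: "lin_ext f 0 = 0"
  unfolding lin_ext_def by simp

lemma lin_ext_zero_fun [simp]: "lin_ext (\<lambda>_. 0) v = 0"
  by (rule poly_mapping_eqI) (simp add: lookup_lin_ext)

lemma lin_ext_cong: "(\<And>b. b \<in> Poly_Mapping.keys v \<Longrightarrow> f b = g b) \<Longrightarrow> lin_ext f v = lin_ext g v"
  unfolding lin_ext_def by simp

lemma lin_ext_single [simp]: "lin_ext f (bas b) = f b"
  by (rule poly_mapping_eqI) (simp add: lookup_lin_ext)

lemma keys_lin_ext: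
  "Poly_Mapping.keys (lin_ext f v) \<subseteq> (\<Union>b\<in>Poly_Mapping.keys v. Poly_Mapping.keys (f b))"
  by (auto simp: lookup_lin_ext in_keys_iff intro: ccontr dest: sum.not_neutral_contains_not_neutral)

lemma lin_ext_swap:
  "lin_ext (\<lambda>a. lin_ext (\<lambda>b. K a b) v) u = lin_ext (\<lambda>b. lin_ext (\<lambda>a. K a b) u) v"
  by (rule poly_mapping_eqI)
    (simp add: lookup_lin_ext sum_distrib_left mult.left_commute sum.swap[of _ "Poly_Mapping.keys u"])

lemma lin_ext_lin_ext: "lin_ext f (lin_ext g v) = lin_ext (\<lambda>b. lin_ext f (g b)) v"
proof (rule poly_mapping_eqI)
  fix x
  let ?S = "\<Union>b\<in>Poly_Mapping.keys v. Poly_Mapping.keys (g b)"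
  have fin: "finite ?S" by simp
  have "Poly_Mapping.lookup (lin_ext f (lin_ext g v)) x
      = (\<Sum>c\<in>?S. Poly_Mapping.lookup (lin_ext g v) c * Poly_Mapping.lookup (f c) x)"
    by (rule lookup_lin_ext_superset[OF fin keys_lin_ext])
  also have "\<dots> = (\<Sum>c\<in>?S. (\<Sum>b\<in>Poly_Mapping.keys v. Poly_Mapping.lookup v b * Poly_Mapping.lookup (g b) c)
      * Poly_Mapping.lookup (f c) x)"
    by (simp add: lookup_lin_ext)
  also have "\<dots> = (\<Sum>b\<in>Poly_Mapping.keys v. Poly_Mapping.lookup v b
      * (\<Sum>c\<in>?S. Poly_Mapping.lookup (g b) c * Poly_Mapping.lookup (f c) x))"
    by (simp add: sum_distrib_right sum_distrib_left mult.assoc sum.swap[of _ ?S])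
  also have "\<dots> = (\<Sum>b\<in>Poly_Mapping.keys v. Poly_Mapping.lookup v b * Poly_Mapping.lookup (lin_ext f (g b)) x)"
    by (intro sum.cong refl arg_cong2[where f="(*)"] lookup_lin_ext_superset[symmetric] fin) auto
  finally show "Poly_Mapping.lookup (lin_ext f (lin_ext g v)) x
      = Poly_Mapping.lookup (lin_ext (\<lambda>b. lin_ext f (g b)) v) x"
    by (simp add: lookup_lin_ext)
qed

lemma tens_lin_ext_left: "tens (lin_ext f u) v = lin_ext (\<lambda>c. tens (f c) v) u"
  unfolding tens_def by (simp add: lin_ext_lin_ext)

lemma tens_lin_ext_right: "tens u (lin_ext g v) = lin_ext (\<lambda>d. tens u (g d)) v"
  unfolding tens_def by (simp add: lin_ext_lin_ext lin_ext_swap[of _ u])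

lemma lin_ext_tens:
  "lin_ext (\<lambda>(c, d). tens (f c) (g d)) (tens u v) = tens (lin_ext f u) (lin_ext g v)"
proof -
  have "lin_ext (\<lambda>(c, d). tens (f c) (g d)) (tens u v) = lin_ext (\<lambda>c. lin_ext (\<lambda>d. tens (f c) (g d)) v) u"
    unfolding tens_def[of u v] by (simp add: lin_ext_lin_ext)
  also have "\<dots> = tens (lin_ext f u) (lin_ext g v)"
    by (simp add: tens_lin_ext_left) (simp add: tens_lin_ext_right)
  finally show ?thesis .
qed

lemma lin_ext_single_id [simp]: "lin_ext bas v = v"
proof (rule poly_mapping_eqI)
  fix x
  have "Poly_Mapping.lookup (lin_ext bas v) x
      = (\<Sum>b\<in>Poly_Mapping.keys v. Poly_Mapping.lookup v b * (if b = x then 1 else 0))"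
    by (simp add: lookup_lin_ext lookup_single when_def)
  also have "\<dots> = (\<Sum>b\<in>Poly_Mapping.keys v. if b = x then Poly_Mapping.lookup v b else 0)"
    by (rule sum.cong) auto
  finally show "Poly_Mapping.lookup (lin_ext bas v) x = Poly_Mapping.lookup v x"
    by (simp add: sum.delta' in_keys_iff)
qed

lemma keys_tens:
  fixes u :: "'a \<Rightarrow>\<^sub>0 'k::field" and v :: "'c \<Rightarrow>\<^sub>0 'k"
  shows "Poly_Mapping.keys (tens u v) \<subseteq> Poly_Mapping.keys u \<times> Poly_Mapping.keys v"
proof
  fix k assume "k \<in> Poly_Mapping.keys (tens u v)"
  then obtain c where c: "c \<in> Poly_Mapping.keys u"
      and "k \<in> Poly_Mapping.keys (lin_ext (\<lambda>d. bas (c, d)) v)"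
    unfolding tens_def using keys_lin_ext by fastforce
  then obtain d where "d \<in> Poly_Mapping.keys v" "k \<in> Poly_Mapping.keys (bas (c, d) :: _ \<Rightarrow>\<^sub>0 'k)"
    using keys_lin_ext by fastforce
  with c show "k \<in> Poly_Mapping.keys u \<times> Poly_Mapping.keys v" by simp
qed

lemma lin_ext_bul_single_right: "lin_ext (\<lambda>d. bul bb i x (bas d)) w = bul bb i x w"
  unfolding bul_def by (simp add: lin_ext_swap[of _ w])

lemma Delta_diff: "Delta cop (u - v) = Delta cop u - Delta cop v"
  unfolding Delta_def by (rule lin_ext_diff)

lemma hom_single: "hom deg (deg b) (bas b)"
  unfolding hom_def by simp

lemma hom_hdeg: "hom deg n x \<Longrightarrow> hom deg (hdeg deg x) x"
  unfolding hom_def hdeg_def by (metis (mono_tags, lifting) ex_in_conv keys_eq_empty someI_ex)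

lemma chain0_Nil [simp]: "chain0 bb [] y = y"
  by (simp add: chain0_def)

lemma chain0_Cons [simp]: "chain0 bb (x # xs) y = bul bb 0 x (chain0 bb xs y)"
  by (simp add: chain0_def)

text \<open>On basis tensors: \<open>(x \<bullet>\<^sub>0 -) \<otimes> id\<close>, and the summand \<open>c \<otimes> d \<mapsto> c \<otimes> (z \<bullet>\<^bsub>i-|c|\<^esub> d)\<close>
  of the first sum of rule (2), which is \<open>0\<close> outside that sum's range \<open>|c| \<le> i\<close>.\<close>

definition bul0_tensor_id :: "(nat \<Rightarrow> 'b \<Rightarrow> 'b \<Rightarrow> ('b \<Rightarrow>\<^sub>0 'k::field)) \<Rightarrow> ('b \<Rightarrow>\<^sub>0 'k)
    \<Rightarrow> 'b \<times> 'b \<Rightarrow> ('b \<times> 'b \<Rightarrow>\<^sub>0 'k)" where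
  "bul0_tensor_id bb x = (\<lambda>(c, d). tens (bul bb 0 x (bas c)) (bas d))"

definition id_tensor_bul :: "('b \<Rightarrow> nat) \<Rightarrow> (nat \<Rightarrow> 'b \<Rightarrow> 'b \<Rightarrow> ('b \<Rightarrow>\<^sub>0 'k::field)) \<Rightarrow> ('b \<Rightarrow>\<^sub>0 'k)
    \<Rightarrow> nat \<Rightarrow> 'b \<times> 'b \<Rightarrow> ('b \<times> 'b \<Rightarrow>\<^sub>0 'k)" where
  "id_tensor_bul deg bb z i =
     (\<lambda>(c, d). if deg c \<le> i then tens (bas c) (bul bb (i - deg c) z (bas d)) else 0)"

lemma lin_ext_bul0_tensor_id_tens:
  "lin_ext (bul0_tensor_id bb x) (tens u v) = tens (bul bb 0 x u) v"
  using lin_ext_tens[of "\<lambda>c. bul bb 0 x (bas c)" bas u v]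
  by (simp add: bul0_tensor_id_def lin_ext_bul_single_right)

lemma lin_ext_id_tensor_bul_tens:
  assumes "hom deg n u" "n \<le> i"
  shows "lin_ext (id_tensor_bul deg bb z i) (tens u v) = tens u (bul bb (i - n) z v)"
proof -
  have "lin_ext (id_tensor_bul deg bb z i) (tens u v)
      = lin_ext (\<lambda>(c, d). tens (bas c) (bul bb (i - n) z (bas d))) (tens u v)"
  proof (rule lin_ext_cong)
    fix k assume "k \<in> Poly_Mapping.keys (tens u v)"
    then have "deg (fst k) = n" using assms(1) keys_tens unfolding hom_def by fastforce
    then show "id_tensor_bul deg bb z i k = (\<lambda>(c, d). tens (bas c) (bul bb (i - n) z (bas d))) k"
      using assms(2) by (cases k) (simp add: id_tensor_bul_def)
  qed
  then show ?thesis
    by (simp add: lin_ext_tens[of bas "\<lambda>d. bul bb (i - n) z (bas d)"] lin_ext_bul_single_right)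
qed

context
  fixes deg :: "'b \<Rightarrow> nat"
    and bb :: "nat \<Rightarrow> 'b \<Rightarrow> 'b \<Rightarrow> ('b \<Rightarrow>\<^sub>0 'k::field)"
    and cop :: "'b \<Rightarrow> ('b \<times> 'b \<Rightarrow>\<^sub>0 'k)"
  assumes psb: "preshuffle_bialgebra deg bb cop"
begin

lemma hom_bul:
  assumes "hom deg n x" "hom deg m y" "i \<le> m"
  shows "hom deg (n + m) (bul bb i x y)"
  unfolding hom_def
proof
  fix k assume "k \<in> Poly_Mapping.keys (bul bb i x y)"
  then obtain a where a: "a \<in> Poly_Mapping.keys x"
      and "k \<in> Poly_Mapping.keys (lin_ext (\<lambda>b. bb i a b) y)"
    unfolding bul_def using keys_lin_ext by fastforce
  then obtain b where b: "b \<in> Poly_Mapping.keys y" and k: "k \<in> Poly_Mapping.keys (bb i a b)"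
    using keys_lin_ext by fastforce
  have "deg a = n" "deg b = m" using a b assms by (auto simp: hom_def)
  moreover have "hom deg (deg a + deg b) (bb i a b)"
    using psb assms(3) \<open>deg b = m\<close> unfolding preshuffle_bialgebra_def by auto
  ultimately show "deg k = n + m" using k by (auto simp: hom_def)
qed

lemma hom_chain0:
  assumes "\<forall>x\<in>set xs. hom deg (hdeg deg x) x" "hom deg m y"
  shows "hom deg (sum_list (map (hdeg deg) xs) + m) (chain0 bb xs y)"
  using assms(1)
  by (induction xs) (auto simp: assms(2) add.assoc intro: hom_bul)

lemma deg_keys_Delta:
  assumes "hom deg m w" "(c, d) \<in> Poly_Mapping.keys (Delta cop w)"
  shows "deg c + deg d = m"
proof -
  obtain b where "b \<in> Poly_Mapping.keys w" "(c, d) \<in> Poly_Mapping.keys (cop b)"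
    using assms(2) keys_lin_ext unfolding Delta_def by fastforce
  then show ?thesis
    using psb assms(1) unfolding preshuffle_bialgebra_def hom_def by auto
qed

lemma Delta_bul0_primitive:
  assumes "hom deg n x" "Delta cop x = 0" "hom deg m w"
  shows "Delta cop (bul bb 0 x w) = tens x w + lin_ext (bul0_tensor_id bb x) (Delta cop w)"
proof -
  have "Delta cop (bul bb 0 x w) =
      lin_ext (\<lambda>(a, b). tens (bas a) (bul bb 0 (bas b) w)) (Delta cop x) + tens x w
      + lin_ext (\<lambda>(c, d). tens (bul bb 0 x (bas c)) (bas d)) (Delta cop w)"
    using psb assms(1,3) unfolding preshuffle_bialgebra_def by blast
  then show ?thesis using assms(2) by (simp add: bul0_tensor_id_def)
qed

text \<open>The hypothesis on the left factors of \<open>\<Delta> w\<close> kills the last sum of rule (2); it holds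
  automatically when \<open>i = m\<close>, where rule (3) applies instead.\<close>

lemma Delta_bul_primitive_left:
  assumes z: "hom deg l z" "Delta cop z = 0"
    and w: "hom deg m w" and i: "0 < i" "i \<le> m"
    and small: "\<forall>(c, d)\<in>Poly_Mapping.keys (Delta cop w). deg c < i"
  shows "Delta cop (bul bb i z w)
    = lin_ext (id_tensor_bul deg bb z i) (Delta cop w) + (if i = m then tens w z else 0)"
proof (cases "i = m")
  case True
  have "Delta cop (bul bb m z w) =
      lin_ext (\<lambda>(c, d). tens (bas c) (bul bb (deg d) z (bas d))) (Delta cop w) + tens w z
      + lin_ext (\<lambda>(a, b). tens (bul bb m (bas a) w) (bas b)) (Delta cop z)"
    using psb z(1) w unfolding preshuffle_bialgebra_def by blast
  also have "lin_ext (\<lambda>(c, d). tens (bas c) (bul bb (deg d) z (bas d))) (Delta cop w)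
      = lin_ext (id_tensor_bul deg bb z m) (Delta cop w)"
  proof (rule lin_ext_cong)
    fix k assume "k \<in> Poly_Mapping.keys (Delta cop w)"
    moreover obtain c d where "k = (c, d)" by fastforce
    ultimately have "deg c + deg d = m" using deg_keys_Delta[OF w] by blast
    then have "deg c \<le> m" "m - deg c = deg d" by auto
    then show "(\<lambda>(c, d). tens (bas c) (bul bb (deg d) z (bas d))) k = id_tensor_bul deg bb z m k"
      by (simp add: \<open>k = (c, d)\<close> id_tensor_bul_def)
  qed
  finally show ?thesis using True z(2) by simp
next
  case False
  have "Delta cop (bul bb i z w) =
      lin_ext (id_tensor_bul deg bb z i) (Delta cop w)
      + lin_ext (\<lambda>(a, b). lin_ext (\<lambda>(c, d).
          if deg c = i then tens (bul bb i (bas a) (bas c)) (bul bb 0 (bas b) (bas d)) else 0)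
        (Delta cop w)) (Delta cop z)
      + lin_ext (\<lambda>(c, d). if i \<le> deg c then tens (bul bb i z (bas c)) (bas d) else 0) (Delta cop w)"
  proof -
    have "1 \<le> i" "i \<le> m - 1" using i False by auto
    then show ?thesis
      using psb z(1) w unfolding preshuffle_bialgebra_def id_tensor_bul_def by blast
  qed
  also have "lin_ext (\<lambda>(c, d). if i \<le> deg c then tens (bul bb i z (bas c)) (bas d) else 0) (Delta cop w)
      = lin_ext (\<lambda>_. 0) (Delta cop w)"
    using small by (intro lin_ext_cong) auto
  finally show ?thesis using False z(2) by simp
qed

lemma deg_keys_Delta_chain0:
  assumes "\<forall>x\<in>set xs. hom deg (hdeg deg x) x \<and> Delta cop x = 0"
    and "hom deg m y" "Delta cop y = 0"
  shows "\<forall>(c, d)\<in>Poly_Mapping.keys (Delta cop (chain0 bb xs y)). deg c \<le> sum_list (map (hdeg deg) xs)"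
  using assms(1)
proof (induction xs)
  case Nil
  then show ?case using assms(3) by simp
next
  case (Cons x xs)
  let ?W = "chain0 bb xs y"
  have x: "hom deg (hdeg deg x) x" "Delta cop x = 0" using Cons.prems by auto
  have W: "hom deg (sum_list (map (hdeg deg) xs) + m) ?W"
    using hom_chain0 Cons.prems assms(2) by simp
  show ?case
  proof (intro ballI, clarify)
    fix c d assume "(c, d) \<in> Poly_Mapping.keys (Delta cop (chain0 bb (x # xs) y))"
    then have "(c, d) \<in> Poly_Mapping.keys (tens x ?W)
        \<or> (c, d) \<in> Poly_Mapping.keys (lin_ext (bul0_tensor_id bb x) (Delta cop ?W))"
      using Delta_bul0_primitive[OF x W] keys_add by fastforce
    then show "deg c \<le> sum_list (map (hdeg deg) (x # xs))"
    proof
      assume "(c, d) \<in> Poly_Mapping.keys (tens x ?W)"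
      then have "c \<in> Poly_Mapping.keys x" using keys_tens by fastforce
      then show ?thesis using x(1) by (auto simp: hom_def)
    next
      assume "(c, d) \<in> Poly_Mapping.keys (lin_ext (bul0_tensor_id bb x) (Delta cop ?W))"
      then obtain c' d' where c'd': "(c', d') \<in> Poly_Mapping.keys (Delta cop ?W)"
        and "(c, d) \<in> Poly_Mapping.keys (tens (bul bb 0 x (bas c')) (bas d'))"
        using keys_lin_ext unfolding bul0_tensor_id_def by fastforce
      then have "c \<in> Poly_Mapping.keys (bul bb 0 x (bas c'))" using keys_tens by fastforce
      then have "deg c = hdeg deg x + deg c'"
        using hom_bul[OF x(1) hom_single] unfolding hom_def by auto
      then show ?thesis using Cons.IH Cons.prems c'd' by fastforce
    qed
  qed
qed

lemma lin_ext_id_tensor_bul_Delta_bul0: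
  assumes x: "hom deg (hdeg deg x) x" "Delta cop x = 0"
    and w: "hom deg m w"
    and small: "\<forall>(c, d)\<in>Poly_Mapping.keys (Delta cop w). deg c \<le> i"
  shows "lin_ext (id_tensor_bul deg bb z (i + hdeg deg x)) (Delta cop (bul bb 0 x w))
    = tens x (bul bb i z w)
      + lin_ext (bul0_tensor_id bb x) (lin_ext (id_tensor_bul deg bb z i) (Delta cop w))"
proof -
  have "lin_ext (id_tensor_bul deg bb z (i + hdeg deg x)) (lin_ext (bul0_tensor_id bb x) (Delta cop w))
      = lin_ext (bul0_tensor_id bb x) (lin_ext (id_tensor_bul deg bb z i) (Delta cop w))"
    unfolding lin_ext_lin_ext
  proof (rule lin_ext_cong)
    fix k assume "k \<in> Poly_Mapping.keys (Delta cop w)"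
    moreover obtain c d where k: "k = (c, d)" by fastforce
    ultimately have c: "deg c \<le> i" using small by blast
    have "hom deg (hdeg deg x + deg c) (bul bb 0 x (bas c))"
      using hom_bul[OF x(1) hom_single] by simp
    then have "lin_ext (id_tensor_bul deg bb z (i + hdeg deg x)) (bul0_tensor_id bb x k)
        = tens (bul bb 0 x (bas c)) (bul bb (i - deg c) z (bas d))"
      using lin_ext_id_tensor_bul_tens[where n = "hdeg deg x + deg c" and i = "i + hdeg deg x"] c
      by (simp add: k bul0_tensor_id_def)
    also have "\<dots> = lin_ext (bul0_tensor_id bb x) (id_tensor_bul deg bb z i k)"
      using c by (simp add: k id_tensor_bul_def lin_ext_bul0_tensor_id_tens)
    finally show "lin_ext (id_tensor_bul deg bb z (i + hdeg deg x)) (bul0_tensor_id bb x k)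
        = lin_ext (bul0_tensor_id bb x) (id_tensor_bul deg bb z i k)" .
  qed
  then show ?thesis
    using lin_ext_id_tensor_bul_tens[OF x(1), of "i + hdeg deg x"]
    by (simp add: Delta_bul0_primitive[OF x w] lin_ext_add)
qed

lemma Delta_Lop_Nil:
  assumes y: "hom deg (hdeg deg y) y" "Delta cop y = 0"
    and z: "hom deg l z" "Delta cop z = 0"
    and p: "1 \<le> p" "p \<le> hdeg deg y"
  shows "Delta cop (Lop deg bb p [] y z) = 0"
proof -
  have "Delta cop (bul bb p z y) = (if p = hdeg deg y then tens y z else 0)"
    using Delta_bul_primitive_left[OF z y(1), of p] p y(2) by simp
  moreover have "Delta cop (bul bb 0 y z) = tens y z"
    using Delta_bul0_primitive[OF y(1,2) z(1)] z(2) by simp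
  ultimately show ?thesis by (cases "p = hdeg deg y") (simp_all add: Lop_def Delta_diff)
qed

lemma Delta_Lop_Cons:
  assumes xs: "\<forall>x\<in>set (x # xs). hom deg (hdeg deg x) x \<and> Delta cop x = 0"
    and y: "hom deg (hdeg deg y) y" "Delta cop y = 0"
    and z: "hom deg l z" "Delta cop z = 0"
    and p: "1 \<le> p" "p \<le> hdeg deg y"
  shows "Delta cop (Lop deg bb p (x # xs) y z) = 0"
proof -
  let ?N = "sum_list (map (hdeg deg) xs)"
  let ?i = "p + ?N" and ?W = "chain0 bb xs y"
  let ?V = "bul bb ?i z ?W"
  have x: "hom deg (hdeg deg x) x" "Delta cop x = 0" using xs by auto
  have W: "hom deg (?N + hdeg deg y) ?W" using hom_chain0 xs y(1) by simp
  have xW: "hom deg (hdeg deg x + (?N + hdeg deg y)) (bul bb 0 x ?W)"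
    using hom_bul[OF x(1) W] by simp
  have V: "hom deg (l + (?N + hdeg deg y)) ?V" using hom_bul[OF z(1) W] p by simp
  have small_W: "\<forall>(c, d)\<in>Poly_Mapping.keys (Delta cop ?W). deg c \<le> ?N"
    using deg_keys_Delta_chain0[OF _ y] xs by simp
  then have small_W_i: "\<forall>(c, d)\<in>Poly_Mapping.keys (Delta cop ?W). deg c \<le> ?i"
    and small_W_i': "\<forall>(c, d)\<in>Poly_Mapping.keys (Delta cop ?W). deg c < ?i"
    using p by fastforce+
  have small_xW: "\<forall>(c, d)\<in>Poly_Mapping.keys (Delta cop (bul bb 0 x ?W)). deg c < ?i + hdeg deg x"
    using deg_keys_Delta_chain0[OF xs y] p by fastforce
  have Delta_V: "Delta cop ?V
      = lin_ext (id_tensor_bul deg bb z ?i) (Delta cop ?W) + (if p = hdeg deg y then tens ?W z else 0)"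
    using Delta_bul_primitive_left[OF z W _ _ small_W_i'] p by simp
  have "Delta cop (bul bb (?i + hdeg deg x) z (bul bb 0 x ?W))
      = lin_ext (id_tensor_bul deg bb z (?i + hdeg deg x)) (Delta cop (bul bb 0 x ?W))
        + (if p = hdeg deg y then tens (bul bb 0 x ?W) z else 0)"
    using Delta_bul_primitive_left[OF z xW _ _ small_xW] p by simp
  also have "\<dots> = tens x ?V
        + lin_ext (bul0_tensor_id bb x) (lin_ext (id_tensor_bul deg bb z ?i) (Delta cop ?W))
        + (if p = hdeg deg y then tens (bul bb 0 x ?W) z else 0)"
    by (simp add: lin_ext_id_tensor_bul_Delta_bul0[OF x W small_W_i])
  also have "\<dots> = Delta cop (bul bb 0 x ?V)"
    by (simp add: Delta_bul0_primitive[OF x V] Delta_V lin_ext_add lin_ext_bul0_tensor_id_tens)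
  moreover have "Lop deg bb p (x # xs) y z = bul bb (?i + hdeg deg x) z (bul bb 0 x ?W) - bul bb 0 x ?V"
    by (simp add: Lop_def add_ac)
  ultimately show ?thesis by (simp add: Delta_diff)
qed

end

theorem mainTheorem18:
  fixes deg :: "'b \<Rightarrow> nat"
    and bb :: "nat \<Rightarrow> 'b \<Rightarrow> 'b \<Rightarrow> ('b \<Rightarrow>\<^sub>0 'k::field)"
    and cop :: "'b \<Rightarrow> ('b \<times> 'b \<Rightarrow>\<^sub>0 'k)"
    and xs :: "('b \<Rightarrow>\<^sub>0 'k) list"
    and y z :: "'b \<Rightarrow>\<^sub>0 'k"
    and p :: nat
  assumes "preshuffle_bialgebra deg bb cop"
    and "\<forall>x\<in>set xs. (\<exists>n. hom deg n x) \<and> Delta cop x = 0"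
    and "\<exists>n. hom deg n y" and "Delta cop y = 0"
    and "\<exists>n. hom deg n z" and "Delta cop z = 0"
    and "1 \<le> p" and "p \<le> hdeg deg y"
  shows "Delta cop (Lop deg bb p xs y z) = 0"
proof -
  have xs: "\<forall>x\<in>set xs. hom deg (hdeg deg x) x \<and> Delta cop x = 0"
    using assms(2) hom_hdeg by blast
  have y: "hom deg (hdeg deg y) y" using assms(3) hom_hdeg by blast
  obtain l where z: "hom deg l z" using assms(5) by blast
  show ?thesis
  proof (cases xs)
    case Nil
    then show ?thesis using Delta_Lop_Nil[OF assms(1) y assms(4) z assms(6-8)] by simp
  next
    case (Cons x xs')
    then show ?thesis using Delta_Lop_Cons[OF assms(1) _ y assms(4) z assms(6-8)] xs by simp
  qed
qed

end
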